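(* Let $n \ge 2$, let $A$ be an $n\times n$ real matrix with $\mathrm{Tr}(AA^t)=n$, let $O$ be Haar distributed on $O(n,\mathbb{R})$, and for $t>0$ let $O'$ be obtained from $O$ by running the heat kernel on $O(n,\mathbb{R})$ for time $t$. Let $W = \mathrm{Tr}(AO)$ and $W' = \mathrm{Tr}(AO')$. Then \[ \mathbb{E}[(W'-W)^2 \mid O] = t\,[\,n - p_2(AO)\,] + R_t, \] where $p_2(AO) = \mathrm{Tr}((AO)^2)$ and $\sup|R_t| = O(t^2)$ as $t \to 0$.
   Context: The Laplacian on $O(n,\mathbb{R})$ is $\Delta = \frac12\sum_{1\le i<j\le n} X_{ij}^2$, where $X_{ij}$ is the left-invariant vector field $X_{ij}f(O) = \frac{d}{ds}\big|_{s=0} f(O e^{s(E_{ij}-E_{ji})})$ and $E_{ij}$ are the matrix units. The heat kernel $K(t,x,y)$ is the kernel of $e^{t\Delta}$ with respect to Haar measure: $(e^{t\Delta}\phi)(x) = \int K(t,x,y)\phi(y)\,dy$; it is nonnegative, symmetric and integrates to $1$ in $y$. "Running the heat kernel for time $t$" means $O'$ has conditional law $K(t,O,y)\,dy$ given $O$, so $\mathbb{E}[\phi(O')\mid O] = (e^{t\Delta}\phi)(O)$. *)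

theory Defs
  imports "HOL-Analysis.Analysis"
begin

text \<open>The one-parameter subgroup s |-> exp(s (E_ij - E_ji)) of O(n), written out
  explicitly (Givens rotation): identity except for entries
  (i,i) = (j,j) = cos s, (i,j) = sin s, (j,i) = - sin s   (for i \<noteq> j).\<close>
definition rot_exp :: "'n::finite \<Rightarrow> 'n \<Rightarrow> real \<Rightarrow> real^'n^'n" where
  "rot_exp i j s = (\<chi> a b.
      if a = b then (if a = i \<or> a = j then cos s else 1)
      else if a = i \<and> b = j then sin s
      else if a = j \<and> b = i then - sin s
      else 0)"

definition lie_X :: "'n::finite \<Rightarrow> 'n \<Rightarrow> (real^'n^'n \<Rightarrow> real) \<Rightarrow> real^'n^'n \<Rightarrow> real" where
  "lie_X i j f Q = deriv (\<lambda>s. f (Q ** rot_exp i j s)) 0"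

definition laplacian_On :: "(real^'n::{finite,linorder}^'n::{finite,linorder} \<Rightarrow> real) \<Rightarrow> real^'n::{finite,linorder}^'n::{finite,linorder} \<Rightarrow> real" where
  "laplacian_On f Q = (1/2) * (\<Sum>(i,j) \<in> {(i,j). i < j}. lie_X i j (lie_X i j f) Q)"

text \<open>u is a classical solution of the heat equation d/dt u = Delta u on O(n) with
  initial datum phi, i.e. u t = e^{t Delta} phi (classical solutions on the compact
  group are unique by the maximum principle).\<close>
definition heat_solution_On ::
  "(real^'n::{finite,linorder}^'n::{finite,linorder} \<Rightarrow> real) \<Rightarrow> (real \<Rightarrow> real^'n::{finite,linorder}^'n::{finite,linorder} \<Rightarrow> real) \<Rightarrow> bool" where
  "heat_solution_On phi u \<longleftrightarrow>
     (\<forall>x. orthogonal_matrix x \<longrightarrow> u 0 x = phi x) \<and>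
     continuous_on ({0..} \<times> {x. orthogonal_matrix x}) (\<lambda>(t, x). u t x) \<and>
     (\<forall>t>0. \<forall>x. orthogonal_matrix x \<longrightarrow> (\<forall>i j.
        (\<forall>s. (\<lambda>r. u t (x ** rot_exp i j r)) differentiable (at s)) \<and>
        (\<lambda>r. lie_X i j (u t) (x ** rot_exp i j r)) differentiable (at 0))) \<and>
     (\<forall>t>0. \<forall>x. orthogonal_matrix x \<longrightarrow>
        ((\<lambda>s. u s x) has_real_derivative laplacian_On (u t) x) (at t))"

end

theory Submission
  imports Defs
begin

text \<open>Fix Q, put c = Tr(AQ), \<phi>(y) = (Tr(Ay) - c)^2 and \<psi> = \<Delta>\<phi>.  Right multiplication by the
  rotation exp(r(E_ij - E_ji)) moves M = Ay along M + sin r MX + (1 - cos r) MX^2, so \<phi>, \<psi> and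
  \<Delta>\<psi> are trigonometric polynomials along every such curve, with second derivatives bounded by a
  constant C depending only on A.  Hence \<phi> + t\<psi> \<plusminus> (C t^2 + \<epsilon>(1 + t)) are strict super- and
  subsolutions of the heat equation on [0,1] \<times> O(n), and the parabolic maximum principle traps
  the heat flow of \<phi> between them.  Finally \<phi>(Q) = 0 and
  \<psi>(Q) = \<Sum>_{i<j} (M_ji - M_ij)^2 = Tr(AA^t) - Tr(M^2) with M = AQ.\<close>

section \<open>Rotation curves\<close>

text \<open>M X and M X^2 for the generator X = E_ij - E_ji (i \<noteq> j).\<close>

definition mul_rot_gen :: "real^'n::finite^'n \<Rightarrow> 'n \<Rightarrow> 'n \<Rightarrow> real^'n^'n" where
  "mul_rot_gen M i j = (\<chi> a b. if b = i then - M$a$j else if b = j then M$a$i else 0)"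

definition mul_rot_gen_sq :: "real^'n::finite^'n \<Rightarrow> 'n \<Rightarrow> 'n \<Rightarrow> real^'n^'n" where
  "mul_rot_gen_sq M i j = (\<chi> a b. if b = i then - M$a$i else if b = j then - M$a$j else 0)"

lemma matrix_mul_rot_exp_entry:
  fixes X :: "real^'n::finite^'n"
  assumes "i \<noteq> j"
  shows "(X ** rot_exp i j r)$a$b = (if b = i then X$a$i * cos r - X$a$j * sin r
          else if b = j then X$a$i * sin r + X$a$j * cos r else X$a$b)"
proof -
  have "(X ** rot_exp i j r)$a$b = (\<Sum>k\<in>UNIV. X$a$k * rot_exp i j r $k$b)"
    by (simp add: matrix_matrix_mult_def)
  also have "\<dots> = (if b = i then X$a$i * cos r - X$a$j * sin r
          else if b = j then X$a$i * sin r + X$a$j * cos r else X$a$b)"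
  proof (cases "b = i")
    case True
    have "(\<Sum>k\<in>UNIV. X$a$k * rot_exp i j r $k$b) =
        (\<Sum>k\<in>UNIV. (if k = i then X$a$i * cos r else 0) + (if k = j then - X$a$j * sin r else 0))"
      by (rule sum.cong) (use True assms in \<open>auto simp: rot_exp_def\<close>)
    then show ?thesis using True assms by (simp add: sum.distrib)
  next
    case False
    show ?thesis
    proof (cases "b = j")
      case True
      have "(\<Sum>k\<in>UNIV. X$a$k * rot_exp i j r $k$b) =
          (\<Sum>k\<in>UNIV. (if k = i then X$a$i * sin r else 0) + (if k = j then X$a$j * cos r else 0))"
        by (rule sum.cong) (use True assms in \<open>auto simp: rot_exp_def\<close>)
      then show ?thesis using True \<open>b \<noteq> i\<close> assms by (simp add: sum.distrib)
    next
      case False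
      have "(\<Sum>k\<in>UNIV. X$a$k * rot_exp i j r $k$b) = (\<Sum>k\<in>UNIV. if k = b then X$a$b else 0)"
        by (rule sum.cong) (use False \<open>b \<noteq> i\<close> assms in \<open>auto simp: rot_exp_def\<close>)
      then show ?thesis using False \<open>b \<noteq> i\<close> by simp
    qed
  qed
  finally show ?thesis .
qed

lemma matrix_mul_rot_exp:
  fixes X :: "real^'n::finite^'n"
  assumes "i \<noteq> j"
  shows "X ** rot_exp i j r = X + sin r *\<^sub>R mul_rot_gen X i j + (1 - cos r) *\<^sub>R mul_rot_gen_sq X i j"
  using assms
  by (auto simp: vec_eq_iff matrix_mul_rot_exp_entry mul_rot_gen_def mul_rot_gen_sq_def algebra_simps)

lemma rot_exp_0: "rot_exp i j 0 = (mat 1 :: real^'n::finite^'n)"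
  by (auto simp: rot_exp_def mat_def vec_eq_iff)

lemma rot_exp_add:
  assumes "i \<noteq> j"
  shows "rot_exp i j s ** rot_exp i j r = (rot_exp i j (s + r) :: real^'n::finite^'n)"
proof -
  have "(rot_exp i j s ** rot_exp i j r)$a$b = (rot_exp i j (s + r) :: real^'n^'n)$a$b" for a b
    unfolding matrix_mul_rot_exp_entry[OF assms] using assms
    by (cases "a = i"; cases "a = j"; cases "b = i"; cases "b = j";
        simp add: rot_exp_def cos_add sin_add; simp add: algebra_simps)
  then show ?thesis by (simp add: vec_eq_iff)
qed

lemma orthogonal_matrix_rot_exp:
  assumes "i \<noteq> j"
  shows "orthogonal_matrix (rot_exp i j r :: real^'n::finite^'n)"
proof -
  have cs: "cos r * cos r + sin r * sin r = 1" "sin r * sin r + cos r * cos r = 1"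
    by (simp_all add: power2_eq_square[symmetric])
  have "(transpose (rot_exp i j r) ** rot_exp i j r)$a$b = (mat 1 :: real^'n^'n)$a$b" for a b
    unfolding matrix_mul_rot_exp_entry[OF assms] using assms cs
    by (cases "a = i"; cases "a = j"; cases "b = i"; cases "b = j";
        simp add: rot_exp_def transpose_def mat_def; simp add: algebra_simps)
  then show ?thesis by (simp add: orthogonal_matrix vec_eq_iff)
qed

lemma trace_scaleR: "trace (k *\<^sub>R (X :: real^'n::finite^'n)) = k * trace X"
  by (simp add: trace_def sum_distrib_left)

lemma trace_mul_rot_gen: "i \<noteq> j \<Longrightarrow> trace (mul_rot_gen M i j) = M$j$i - M$i$j"
proof -
  assume ij: "i \<noteq> j"
  have "trace (mul_rot_gen M i j) =
      (\<Sum>a\<in>UNIV. (if a = i then - M$i$j else 0) + (if a = j then M$j$i else 0))"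
    unfolding trace_def mul_rot_gen_def by (rule sum.cong) (use ij in auto)
  then show ?thesis by (simp add: sum.distrib)
qed

lemma trace_mul_rot_gen_sq: "i \<noteq> j \<Longrightarrow> trace (mul_rot_gen_sq M i j) = - (M$i$i + M$j$j)"
proof -
  assume ij: "i \<noteq> j"
  have "trace (mul_rot_gen_sq M i j) =
      (\<Sum>a\<in>UNIV. (if a = i then - M$i$i else 0) + (if a = j then - M$j$j else 0))"
    unfolding trace_def mul_rot_gen_sq_def by (rule sum.cong) (use ij in auto)
  then show ?thesis by (simp add: sum.distrib)
qed

definition has_second_deriv_at_0 :: "(real \<Rightarrow> real) \<Rightarrow> real \<Rightarrow> bool" where
  "has_second_deriv_at_0 g D \<longleftrightarrow>
     (\<exists>g'. (\<forall>r. (g has_real_derivative g' r) (at r)) \<and> (g' has_real_derivative D) (at 0))"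

lemma has_second_deriv_at_0_const: "has_second_deriv_at_0 (\<lambda>r. k) 0"
  unfolding has_second_deriv_at_0_def by (intro exI[of _ "\<lambda>r. 0"]) (auto intro!: derivative_intros)

lemma has_second_deriv_at_0_add:
  assumes "has_second_deriv_at_0 g D" "has_second_deriv_at_0 h E"
  shows "has_second_deriv_at_0 (\<lambda>r. g r + h r) (D + E)"
proof -
  from assms obtain g' h' where
    "\<forall>r. (g has_real_derivative g' r) (at r)" "(g' has_real_derivative D) (at 0)"
    "\<forall>r. (h has_real_derivative h' r) (at r)" "(h' has_real_derivative E) (at 0)"
    unfolding has_second_deriv_at_0_def by blast
  then show ?thesis
    unfolding has_second_deriv_at_0_def
    by (intro exI[of _ "\<lambda>r. g' r + h' r"]) (auto intro!: derivative_intros)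
qed

lemma has_second_deriv_at_0_cmult:
  assumes "has_second_deriv_at_0 g D"
  shows "has_second_deriv_at_0 (\<lambda>r. k * g r) (k * D)"
proof -
  from assms obtain g' where "\<forall>r. (g has_real_derivative g' r) (at r)" "(g' has_real_derivative D) (at 0)"
    unfolding has_second_deriv_at_0_def by blast
  then show ?thesis
    unfolding has_second_deriv_at_0_def by (intro exI[of _ "\<lambda>r. k * g' r"]) (auto intro!: DERIV_cmult)
qed

lemma has_second_deriv_at_0_diff:
  "has_second_deriv_at_0 g D \<Longrightarrow> has_second_deriv_at_0 h E \<Longrightarrow>
    has_second_deriv_at_0 (\<lambda>r. g r - h r) (D - E)"
  using has_second_deriv_at_0_add[of g D "\<lambda>r. (-1) * h r" "(-1) * E"]
    has_second_deriv_at_0_cmult[of h E "-1"]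
  by simp

lemma has_second_deriv_at_0_sum:
  "finite S \<Longrightarrow> (\<And>p. p \<in> S \<Longrightarrow> has_second_deriv_at_0 (g p) (D p)) \<Longrightarrow>
    has_second_deriv_at_0 (\<lambda>r. \<Sum>p\<in>S. g p r) (\<Sum>p\<in>S. D p)"
proof (induction S rule: finite_induct)
  case empty
  then show ?case using has_second_deriv_at_0_const[of 0] by simp
next
  case (insert x F)
  then show ?case using has_second_deriv_at_0_add[of "g x" "D x" "\<lambda>r. \<Sum>p\<in>F. g p r"] by simp
qed

lemma has_second_deriv_at_0_cong:
  "has_second_deriv_at_0 g D \<Longrightarrow> (\<And>r. g r = h r) \<Longrightarrow> D = E \<Longrightarrow> has_second_deriv_at_0 h E"
  by (metis ext)

definition trig_affine :: "real \<Rightarrow> real \<Rightarrow> real \<Rightarrow> real \<Rightarrow> real" where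
  "trig_affine a b c r = a + b * sin r + c * (1 - cos r)"

definition trig_affine_prod_dd :: "real \<Rightarrow> real \<Rightarrow> real \<Rightarrow> real \<Rightarrow> real \<Rightarrow> real \<Rightarrow> real" where
  "trig_affine_prod_dd a b c a' b' c' = 2 * b * b' + a * c' + a' * c"

lemma has_second_deriv_at_0_trig_affine_prod:
  "has_second_deriv_at_0 (\<lambda>r. trig_affine a b c r * trig_affine a' b' c' r)
     (trig_affine_prod_dd a b c a' b' c')"
  unfolding has_second_deriv_at_0_def
proof (intro exI[of _ "\<lambda>r. (b * cos r + c * sin r) * trig_affine a' b' c' r
                           + trig_affine a b c r * (b' * cos r + c' * sin r)"] conjI allI)
  show "((\<lambda>r. trig_affine a b c r * trig_affine a' b' c' r) has_real_derivative
      (b * cos r + c * sin r) * trig_affine a' b' c' r + trig_affine a b c r * (b' * cos r + c' * sin r))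
      (at r)" for r
    unfolding trig_affine_def by (auto intro!: derivative_eq_intros simp: algebra_simps)
  show "((\<lambda>r. (b * cos r + c * sin r) * trig_affine a' b' c' r
            + trig_affine a b c r * (b' * cos r + c' * sin r)) has_real_derivative
      trig_affine_prod_dd a b c a' b' c') (at 0)"
    unfolding trig_affine_def trig_affine_prod_dd_def
    by (auto intro!: derivative_eq_intros simp: algebra_simps)
qed

lemma second_deriv_nonpos_at_max:
  fixes G G' :: "real \<Rightarrow> real"
  assumes d1: "\<forall>r. (G has_real_derivative G' r) (at r)" and d2: "(G' has_real_derivative D) (at 0)"
    and max: "\<forall>r. G r \<le> G 0"
  shows "D \<le> 0"
proof (rule ccontr)
  assume "\<not> D \<le> 0"
  then have "D > 0" by simp
  have "G' 0 = 0"
    by (rule DERIV_local_max[where f=G and x=0 and d=1]) (use d1 max in auto)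
  from DERIV_pos_inc_right[OF d2 \<open>D > 0\<close>] obtain d
    where d: "d > 0" "\<forall>h>0. h < d \<longrightarrow> G' 0 < G' (0 + h)"
    by blast
  obtain z where z: "0 < z" "z < d/2" "G (d/2) - G 0 = (d/2) * G' z"
    using MVT2[of 0 "d/2" G G'] d1 d by auto
  have "G' z > 0" using d(2) z \<open>G' 0 = 0\<close> by auto
  then have "(d/2) * G' z > 0" using d by simp
  with max z(3) show False by (metis diff_gt_0_iff_gt not_le)
qed

lemma second_deriv_le_of_max:
  fixes g g' h :: "real \<Rightarrow> real"
  assumes "\<forall>r. (g has_real_derivative g' r) (at r)" "(g' has_real_derivative Dg) (at 0)"
    and "has_second_deriv_at_0 h Dh" and "\<forall>r. g r - h r \<le> g 0 - h 0"
  shows "Dg \<le> Dh"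
proof -
  from assms(3) obtain h' where
    h: "\<forall>r. (h has_real_derivative h' r) (at r)" "(h' has_real_derivative Dh) (at 0)"
    unfolding has_second_deriv_at_0_def by blast
  have "Dg - Dh \<le> 0"
    by (rule second_deriv_nonpos_at_max[of "\<lambda>r. g r - h r" "\<lambda>r. g' r - h' r"])
       (use assms h in \<open>auto intro!: derivative_intros\<close>)
  then show ?thesis by simp
qed

lemma DERIV_nonneg_at_left_max:
  fixes f :: "real \<Rightarrow> real"
  assumes "(f has_real_derivative D) (at t)" "d > 0" "\<And>s. t - d < s \<Longrightarrow> s < t \<Longrightarrow> f s \<le> f t"
  shows "D \<ge> 0"
proof (rule ccontr)
  assume "\<not> D \<ge> 0"
  then obtain e where e: "e > 0" "\<forall>h>0. h < e \<longrightarrow> f t < f (t - h)"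
    using DERIV_neg_dec_left[OF assms(1)] by force
  define h where "h = min e d / 2"
  have "h > 0" "h < e" "h < d" using e assms(2) by (auto simp: h_def)
  then show False using e assms(3)[of "t - h"] by force
qed

lemma lie_X_curve_derivs:
  fixes f :: "real^'n::finite^'n \<Rightarrow> real"
  assumes ij: "i \<noteq> j"
    and d1: "\<forall>s. (\<lambda>r. f (x ** rot_exp i j r)) differentiable (at s)"
    and d2: "(\<lambda>r. lie_X i j f (x ** rot_exp i j r)) differentiable (at 0)"
  shows "\<forall>r. ((\<lambda>r. f (x ** rot_exp i j r)) has_real_derivative deriv (\<lambda>r. f (x ** rot_exp i j r)) r) (at r)"
    and "(deriv (\<lambda>r. f (x ** rot_exp i j r)) has_real_derivative lie_X i j (lie_X i j f) x) (at 0)"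
proof -
  define g where "g = (\<lambda>r. f (x ** rot_exp i j r))"
  have dg: "(g has_real_derivative deriv g s) (at s)" for s
    using d1 unfolding g_def by (simp add: DERIV_deriv_iff_real_differentiable)
  then show "\<forall>r. ((\<lambda>r. f (x ** rot_exp i j r)) has_real_derivative deriv (\<lambda>r. f (x ** rot_exp i j r)) r) (at r)"
    unfolding g_def by blast
  have "lie_X i j f (x ** rot_exp i j s) = deriv g s" for s
  proof -
    have "(\<lambda>r. f (x ** rot_exp i j s ** rot_exp i j r)) = (\<lambda>r. g (r + s))"
      by (auto simp: g_def matrix_mul_assoc[symmetric] rot_exp_add[OF ij] add.commute)
    moreover have "((\<lambda>r. g (r + s)) has_real_derivative deriv g s) (at 0)"
      using dg[of s] DERIV_shift[of g "deriv g s" 0 s] by simp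
    ultimately show ?thesis unfolding lie_X_def by (simp add: DERIV_imp_deriv)
  qed
  then have lie_g: "(\<lambda>r. lie_X i j f (x ** rot_exp i j r)) = deriv g" by auto
  with d2 have "(deriv g has_real_derivative deriv (deriv g) 0) (at 0)"
    by (simp add: DERIV_deriv_iff_real_differentiable)
  moreover have "lie_X i j (lie_X i j f) x = deriv (deriv g) 0"
    unfolding lie_X_def[of i j "lie_X i j f"] using lie_g by simp
  ultimately show "(deriv (\<lambda>r. f (x ** rot_exp i j r)) has_real_derivative lie_X i j (lie_X i j f) x) (at 0)"
    unfolding g_def by simp
qed

section \<open>The squared trace deviation and its Laplacians\<close>

definition trace_dev_sq :: "real^'n::finite^'n \<Rightarrow> real \<Rightarrow> real^'n^'n \<Rightarrow> real" where
  "trace_dev_sq A c y = (trace (A ** y) - c)^2"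

text \<open>The value of X_ij^2 (trace_dev_sq A c) at x, written in terms of M = A x.\<close>

definition trace_dev_sq_X2 :: "real \<Rightarrow> real^'n::finite^'n \<Rightarrow> 'n \<Rightarrow> 'n \<Rightarrow> real" where
  "trace_dev_sq_X2 c M i j = 2 * (M$j$i - M$i$j)^2 - 2 * (trace M - c) * (M$i$i + M$j$j)"

definition trace_dev_sq_lap ::
    "real^'n::{finite,linorder}^'n::{finite,linorder} \<Rightarrow> real \<Rightarrow> real^'n::{finite,linorder}^'n::{finite,linorder} \<Rightarrow> real" where
  "trace_dev_sq_lap A c y = (1/2) * (\<Sum>(i,j)\<in>{(i,j). i < j}. trace_dev_sq_X2 c (A ** y) i j)"

text \<open>The second derivative at 0 of trace_dev_sq_X2 c p q along M + sin r P1 + (1 - cos r) P2.\<close>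

definition trace_dev_sq_X2_dd ::
    "real \<Rightarrow> real^'n::finite^'n \<Rightarrow> real^'n^'n \<Rightarrow> real^'n^'n \<Rightarrow> 'n \<Rightarrow> 'n \<Rightarrow> real" where
  "trace_dev_sq_X2_dd c M P1 P2 p q =
     2 * trig_affine_prod_dd (M$q$p - M$p$q) (P1$q$p - P1$p$q) (P2$q$p - P2$p$q)
                             (M$q$p - M$p$q) (P1$q$p - P1$p$q) (P2$q$p - P2$p$q)
   - 2 * trig_affine_prod_dd (trace M - c) (trace P1) (trace P2)
                             (M$p$p + M$q$q) (P1$p$p + P1$q$q) (P2$p$p + P2$q$q)"

definition trace_dev_sq_lap2 ::
    "real^'n::{finite,linorder}^'n::{finite,linorder} \<Rightarrow> real \<Rightarrow> real^'n::{finite,linorder}^'n::{finite,linorder} \<Rightarrow> real" where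
  "trace_dev_sq_lap2 A c x = (1/2) * (\<Sum>(i,j)\<in>{(i,j). i < j}. (1/2) * (\<Sum>(p,q)\<in>{(p,q). p < q}.
      trace_dev_sq_X2_dd c (A ** x) (mul_rot_gen (A ** x) i j) (mul_rot_gen_sq (A ** x) i j) p q))"

lemma matrix_mul_mul_rot_exp:
  fixes A x :: "real^'n::finite^'n"
  assumes "i \<noteq> j"
  shows "A ** (x ** rot_exp i j r) =
    A ** x + sin r *\<^sub>R mul_rot_gen (A ** x) i j + (1 - cos r) *\<^sub>R mul_rot_gen_sq (A ** x) i j"
  by (subst matrix_mul_assoc) (rule matrix_mul_rot_exp[OF assms])

lemma has_second_deriv_at_0_trace_dev_sq:
  assumes ij: "i \<noteq> j"
  shows "has_second_deriv_at_0 (\<lambda>r. trace_dev_sq A c (x ** rot_exp i j r)) (trace_dev_sq_X2 c (A ** x) i j)"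
proof -
  define M where "M = A ** x"
  let ?a = "trace M - c" and ?b = "M$j$i - M$i$j" and ?c = "- (M$i$i + M$j$j)"
  have "has_second_deriv_at_0 (\<lambda>r. trig_affine ?a ?b ?c r * trig_affine ?a ?b ?c r)
      (trig_affine_prod_dd ?a ?b ?c ?a ?b ?c)"
    by (rule has_second_deriv_at_0_trig_affine_prod)
  then show ?thesis
  proof (rule has_second_deriv_at_0_cong)
    show "trig_affine ?a ?b ?c r * trig_affine ?a ?b ?c r = trace_dev_sq A c (x ** rot_exp i j r)" for r
      unfolding trace_dev_sq_def matrix_mul_mul_rot_exp[OF ij] M_def[symmetric] trace_add trace_scaleR
        trace_mul_rot_gen[OF ij] trace_mul_rot_gen_sq[OF ij] trig_affine_def
      by (simp add: power2_eq_square algebra_simps)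
    show "trig_affine_prod_dd ?a ?b ?c ?a ?b ?c = trace_dev_sq_X2 c (A ** x) i j"
      unfolding trig_affine_prod_dd_def trace_dev_sq_X2_def M_def by (simp add: power2_eq_square algebra_simps)
  qed
qed

lemma trace_dev_sq_X2_curve:
  fixes M P1 P2 :: "real^'n::finite^'n"
  shows "trace_dev_sq_X2 c (M + sin r *\<^sub>R P1 + (1 - cos r) *\<^sub>R P2) p q =
     2 * (trig_affine (M$q$p - M$p$q) (P1$q$p - P1$p$q) (P2$q$p - P2$p$q) r
          * trig_affine (M$q$p - M$p$q) (P1$q$p - P1$p$q) (P2$q$p - P2$p$q) r)
   - 2 * (trig_affine (trace M - c) (trace P1) (trace P2) r
          * trig_affine (M$p$p + M$q$q) (P1$p$p + P1$q$q) (P2$p$p + P2$q$q) r)"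
  unfolding trace_dev_sq_X2_def trig_affine_def trace_add trace_scaleR
  by (simp add: power2_eq_square algebra_simps)

lemma has_second_deriv_at_0_trace_dev_sq_X2:
  "has_second_deriv_at_0 (\<lambda>r. trace_dev_sq_X2 c (M + sin r *\<^sub>R P1 + (1 - cos r) *\<^sub>R P2) p q)
     (trace_dev_sq_X2_dd c M P1 P2 p q)"
  unfolding trace_dev_sq_X2_curve trace_dev_sq_X2_dd_def
  by (intro has_second_deriv_at_0_diff has_second_deriv_at_0_cmult has_second_deriv_at_0_trig_affine_prod)

lemma has_second_deriv_at_0_trace_dev_sq_lap:
  fixes A x :: "real^'n::{finite,linorder}^'n::{finite,linorder}"
  assumes ij: "i \<noteq> j"
  shows "has_second_deriv_at_0 (\<lambda>r. trace_dev_sq_lap A c (x ** rot_exp i j r))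
    ((1/2) * (\<Sum>(p,q)\<in>{(p,q). p < q}.
       trace_dev_sq_X2_dd c (A ** x) (mul_rot_gen (A ** x) i j) (mul_rot_gen_sq (A ** x) i j) p q))"
  unfolding trace_dev_sq_lap_def matrix_mul_mul_rot_exp[OF ij]
proof (intro has_second_deriv_at_0_cmult has_second_deriv_at_0_sum)
  fix pq :: "'n \<times> 'n"
  show "has_second_deriv_at_0 (\<lambda>r. case pq of (p, q) \<Rightarrow> trace_dev_sq_X2 c (A ** x
      + sin r *\<^sub>R mul_rot_gen (A ** x) i j + (1 - cos r) *\<^sub>R mul_rot_gen_sq (A ** x) i j) p q)
    (case pq of (p, q) \<Rightarrow>
      trace_dev_sq_X2_dd c (A ** x) (mul_rot_gen (A ** x) i j) (mul_rot_gen_sq (A ** x) i j) p q)"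
    by (cases pq) (simp add: has_second_deriv_at_0_trace_dev_sq_X2)
qed simp

lemma sum_ordered_pairs_antisym_sq:
  fixes M :: "real^'n::{finite,linorder}^'n::{finite,linorder}"
  shows "(\<Sum>(i,j)\<in>{(i,j). i < j}. (M$j$i - M$i$j)^2) = trace (M ** transpose M) - trace (M ** M)"
proof -
  define f where "f = (\<lambda>(i::'n,j::'n). (M$j$i - M$i$j)^2)"
  define P where "P = {(i::'n,j::'n). i < j}"
  have U: "(UNIV :: ('n \<times> 'n) set) = P \<union> prod.swap ` P \<union> {(i,j). i = j}"
    by (auto simp: P_def image_iff neq_iff)
  have "sum f UNIV = sum f P + sum f (prod.swap ` P) + sum f {(i,j). i = j}"
    unfolding U by (subst sum.union_disjoint; auto simp: P_def sum.union_disjoint)+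
  also have "sum f (prod.swap ` P) = sum f P"
    by (simp add: sum.reindex f_def case_prod_beta power2_commute)
  also have "sum f {(i,j). i = j} = 0"
    by (rule sum.neutral) (auto simp: f_def)
  finally have tot: "sum f UNIV = 2 * sum f P" by simp
  have "sum f UNIV = (\<Sum>i\<in>UNIV. \<Sum>j\<in>UNIV. (M$j$i - M$i$j)^2)"
    unfolding f_def by (simp add: sum.cartesian_product flip: UNIV_Times_UNIV)
  also have "\<dots> = (\<Sum>i\<in>UNIV. \<Sum>j\<in>UNIV. M$j$i * M$j$i) + (\<Sum>i\<in>UNIV. \<Sum>j\<in>UNIV. M$i$j * M$i$j)
       - 2 * (\<Sum>i\<in>UNIV. \<Sum>j\<in>UNIV. M$i$j * M$j$i)"
    by (simp add: power2_eq_square algebra_simps sum.distrib sum_subtractf sum_distrib_left)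
  also have "(\<Sum>i\<in>UNIV. \<Sum>j\<in>UNIV. M$j$i * M$j$i) = (\<Sum>i\<in>UNIV. \<Sum>j\<in>UNIV. M$i$j * M$i$j)"
    by (rule sum.swap)
  also have "(\<Sum>i\<in>UNIV. \<Sum>j\<in>UNIV. M$i$j * M$i$j) = trace (M ** transpose M)"
    by (simp add: trace_def matrix_matrix_mult_def transpose_def)
  also have "(\<Sum>i\<in>UNIV. \<Sum>j\<in>UNIV. M$i$j * M$j$i) = trace (M ** M)"
    by (simp add: trace_def matrix_matrix_mult_def)
  finally show ?thesis using tot unfolding P_def f_def by simp
qed

lemma trace_dev_sq_lap_at_center:
  fixes A Q :: "real^'n::{finite,linorder}^'n::{finite,linorder}"
  assumes "orthogonal_matrix Q"
  shows "trace_dev_sq_lap A (trace (A ** Q)) Q = trace (A ** transpose A) - trace ((A ** Q) ** (A ** Q))"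
proof -
  define M where "M = A ** Q"
  have "trace_dev_sq_lap A (trace (A ** Q)) Q = (\<Sum>(i,j)\<in>{(i,j). i < j}. (M$j$i - M$i$j)^2)"
    unfolding trace_dev_sq_lap_def trace_dev_sq_X2_def M_def[symmetric]
    by (simp add: sum_distrib_left case_prod_beta')
  also have "\<dots> = trace (M ** transpose M) - trace (M ** M)"
    by (rule sum_ordered_pairs_antisym_sq)
  also have "M ** transpose M = A ** transpose A"
    using assms unfolding M_def orthogonal_matrix_def
    by (simp add: matrix_transpose_mul matrix_mul_assoc) (metis matrix_mul_assoc matrix_mul_rid)
  finally show ?thesis unfolding M_def .
qed

definition entry_abs_sum :: "real^'n::finite^'n \<Rightarrow> real" where
  "entry_abs_sum A = (\<Sum>a\<in>UNIV. \<Sum>k\<in>UNIV. \<bar>A$a$k\<bar>)"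

definition trace_dev_sq_lap2_bound :: "real^'n::finite^'n \<Rightarrow> real" where
  "trace_dev_sq_lap2_bound A = 16 * real CARD('n)^6 * entry_abs_sum A ^ 2"

lemma abs_entry_orthogonal_le_1:
  fixes x :: "real^'n::finite^'n"
  assumes "orthogonal_matrix x"
  shows "\<bar>x$k$b\<bar> \<le> 1"
proof -
  have "norm (row k x) = 1" using assms orthogonal_matrix_orthonormal_rows by blast
  moreover have "row k x = x$k" by (simp add: row_def vec_eq_iff)
  ultimately show ?thesis using component_le_norm_cart[of "x$k" b] by simp
qed

lemma abs_matrix_mul_orthogonal_entry_le:
  fixes A x :: "real^'n::finite^'n"
  assumes "orthogonal_matrix x"
  shows "\<bar>(A ** x)$a$b\<bar> \<le> entry_abs_sum A"
proof -
  have "\<bar>(A ** x)$a$b\<bar> \<le> (\<Sum>k\<in>UNIV. \<bar>A$a$k * x$k$b\<bar>)"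
    unfolding matrix_matrix_mult_def by (simp add: sum_abs)
  also have "\<dots> \<le> (\<Sum>k\<in>UNIV. \<bar>A$a$k\<bar>)"
    using abs_entry_orthogonal_le_1[OF assms]
    by (intro sum_mono) (simp add: abs_mult mult_left_le)
  also have "\<dots> \<le> entry_abs_sum A" unfolding entry_abs_sum_def
    by (rule member_le_sum[where f="\<lambda>a. \<Sum>k\<in>UNIV. \<bar>A$a$k\<bar>"]) (auto intro: sum_nonneg)
  finally show ?thesis .
qed

lemma abs_mul_rot_gen_entry_le: "(\<And>a b. \<bar>M$a$b\<bar> \<le> K) \<Longrightarrow> \<bar>mul_rot_gen M i j $a$b\<bar> \<le> K"
  unfolding mul_rot_gen_def by (auto, meson abs_ge_zero order_trans)

lemma abs_mul_rot_gen_sq_entry_le: "(\<And>a b. \<bar>M$a$b\<bar> \<le> K) \<Longrightarrow> \<bar>mul_rot_gen_sq M i j $a$b\<bar> \<le> K"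
  unfolding mul_rot_gen_sq_def by (auto, meson abs_ge_zero order_trans)

lemma abs_trace_le:
  fixes M :: "real^'n::finite^'n"
  assumes "\<And>a b. \<bar>M$a$b\<bar> \<le> K"
  shows "\<bar>trace M\<bar> \<le> real CARD('n) * K"
proof -
  have "\<bar>trace M\<bar> \<le> (\<Sum>a\<in>UNIV. \<bar>M$a$a\<bar>)" unfolding trace_def by (rule sum_abs)
  also have "\<dots> \<le> real CARD('n) * K"
    using sum_bounded_above[of UNIV "\<lambda>a. \<bar>M$a$a\<bar>" K] assms by simp
  finally show ?thesis .
qed

lemma abs_sum_ordered_pairs_le:
  fixes f :: "'n::{finite,linorder} \<Rightarrow> 'n \<Rightarrow> real"
  assumes "\<And>p q. \<bar>f p q\<bar> \<le> B"
  shows "\<bar>\<Sum>(p,q)\<in>{(p,q). p < q}. f p q\<bar> \<le> real CARD('n)^2 * B"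
proof -
  have B: "B \<ge> 0" using assms by (meson abs_ge_zero order_trans)
  have "card {(p::'n,q). p < q} \<le> card (UNIV :: ('n \<times> 'n) set)" by (rule card_mono) auto
  then have card: "real (card {(p::'n,q). p < q}) \<le> real CARD('n)^2"
    by (simp add: power2_eq_square flip: UNIV_Times_UNIV of_nat_mult)
  have "\<bar>\<Sum>(p,q)\<in>{(p,q). p < q}. f p q\<bar> \<le> (\<Sum>pq\<in>{(p,q). p < q}. \<bar>case pq of (p,q) \<Rightarrow> f p q\<bar>)"
    by (rule sum_abs)
  also have "\<dots> \<le> (\<Sum>pq\<in>{(p::'n,q). p < q}. B)"
    using assms by (intro sum_mono) (simp add: case_prod_beta)
  also have "\<dots> \<le> real CARD('n)^2 * B"
    using mult_right_mono[OF card B] by simp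
  finally show ?thesis .
qed

lemma abs_trig_affine_prod_dd_le:
  assumes "\<bar>a\<bar> \<le> L" "\<bar>b\<bar> \<le> L" "\<bar>c\<bar> \<le> L" "\<bar>a'\<bar> \<le> L" "\<bar>b'\<bar> \<le> L" "\<bar>c'\<bar> \<le> L"
  shows "\<bar>trig_affine_prod_dd a b c a' b' c'\<bar> \<le> 4 * L^2"
proof -
  have "\<bar>b * b'\<bar> \<le> L * L" "\<bar>a * c'\<bar> \<le> L * L" "\<bar>a' * c\<bar> \<le> L * L"
    using assms by (auto simp: abs_mult intro!: mult_mono)
  then show ?thesis unfolding trig_affine_prod_dd_def power2_eq_square by (auto simp: abs_le_iff)
qed

lemma abs_trace_dev_sq_X2_dd_le:
  fixes M P1 P2 :: "real^'n::finite^'n"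
  assumes M: "\<And>a b. \<bar>M$a$b\<bar> \<le> K" and P1: "\<And>a b. \<bar>P1$a$b\<bar> \<le> K" and P2: "\<And>a b. \<bar>P2$a$b\<bar> \<le> K"
    and c: "\<bar>c\<bar> \<le> real CARD('n) * K"
  shows "\<bar>trace_dev_sq_X2_dd c M P1 P2 p q\<bar> \<le> 16 * (2 * real CARD('n) * K)^2"
proof -
  define L where "L = 2 * real CARD('n) * K"
  have "K \<ge> 0" using M by (meson abs_ge_zero order_trans)
  then have K: "2 * K \<le> L" "real CARD('n) * K \<le> L"
    unfolding L_def by (simp_all add: mult_right_mono)
  have diff: "\<bar>u - v\<bar> \<le> L" and sum: "\<bar>u + v\<bar> \<le> L" if "\<bar>u\<bar> \<le> K" "\<bar>v\<bar> \<le> K" for u v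
    using that K by (simp_all add: abs_le_iff)
  have tr: "\<bar>trace P\<bar> \<le> L" if "\<And>a b. \<bar>P$a$b\<bar> \<le> K" for P :: "real^'n^'n"
    using abs_trace_le[OF that] K by linarith
  have "\<bar>trace M - c\<bar> \<le> L"
    using abs_trace_le[OF M] c unfolding L_def by (simp add: abs_le_iff)
  then have "\<bar>trig_affine_prod_dd (trace M - c) (trace P1) (trace P2)
            (M$p$p + M$q$q) (P1$p$p + P1$q$q) (P2$p$p + P2$q$q)\<bar> \<le> 4 * L^2"
    by (rule abs_trig_affine_prod_dd_le) (intro sum tr M P1 P2)+
  moreover have "\<bar>trig_affine_prod_dd (M$q$p - M$p$q) (P1$q$p - P1$p$q) (P2$q$p - P2$p$q)
                      (M$q$p - M$p$q) (P1$q$p - P1$p$q) (P2$q$p - P2$p$q)\<bar> \<le> 4 * L^2"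
    by (intro abs_trig_affine_prod_dd_le diff M P1 P2)
  ultimately show ?thesis unfolding trace_dev_sq_X2_dd_def L_def by (simp add: abs_le_iff)
qed

lemma abs_trace_dev_sq_lap2_le:
  fixes A x :: "real^'n::{finite,linorder}^'n::{finite,linorder}"
  assumes x: "orthogonal_matrix x" and c: "\<bar>c\<bar> \<le> real CARD('n) * entry_abs_sum A"
  shows "\<bar>trace_dev_sq_lap2 A c x\<bar> \<le> trace_dev_sq_lap2_bound A"
proof -
  define n where "n = real CARD('n)"
  define K where "K = entry_abs_sum A"
  note M = abs_matrix_mul_orthogonal_entry_le[OF x, of A]
  have inner: "\<bar>\<Sum>(p,q)\<in>{(p,q). p < q}. trace_dev_sq_X2_dd c (A ** x)
            (mul_rot_gen (A ** x) i j) (mul_rot_gen_sq (A ** x) i j) p q\<bar>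
        \<le> n^2 * (16 * (2 * n * K)^2)" for i j
    unfolding n_def K_def
    by (intro abs_sum_ordered_pairs_le abs_trace_dev_sq_X2_dd_le c M
        abs_mul_rot_gen_entry_le abs_mul_rot_gen_sq_entry_le)
  have "\<bar>trace_dev_sq_lap2 A c x\<bar> = (1/2) * \<bar>\<Sum>(i,j)\<in>{(i,j). i < j}. (1/2) * (\<Sum>(p,q)\<in>{(p,q). p < q}.
      trace_dev_sq_X2_dd c (A ** x) (mul_rot_gen (A ** x) i j) (mul_rot_gen_sq (A ** x) i j) p q)\<bar>"
    unfolding trace_dev_sq_lap2_def by (simp add: abs_mult)
  also have "\<dots> \<le> (1/2) * (n^2 * ((1/2) * (n^2 * (16 * (2 * n * K)^2))))"
    unfolding n_def by (intro mult_left_mono abs_sum_ordered_pairs_le) (use inner in \<open>simp_all add: abs_mult n_def mult_ac\<close>)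
  also have "\<dots> = trace_dev_sq_lap2_bound A"
    unfolding trace_dev_sq_lap2_bound_def n_def K_def by (simp add: power2_eq_square eval_nat_numeral)
  finally show ?thesis .
qed

section \<open>The parabolic maximum principle on O(n)\<close>

lemma continuous_on_matrix_mul_left [continuous_intros]:
  fixes f :: "'a::topological_space \<Rightarrow> real^'n::finite^'m::finite"
  shows "continuous_on S f \<Longrightarrow> continuous_on S (\<lambda>p. A ** f p)"
  unfolding matrix_matrix_mult_def by (auto intro!: continuous_intros)

lemma continuous_on_trace [continuous_intros]:
  fixes f :: "'a::topological_space \<Rightarrow> real^'n::finite^'n"
  shows "continuous_on S f \<Longrightarrow> continuous_on S (\<lambda>p. trace (f p))"
  unfolding trace_def by (auto intro!: continuous_intros)

lemma continuous_on_trace_dev_sq [continuous_intros]: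
  "continuous_on S f \<Longrightarrow> continuous_on S (\<lambda>p. trace_dev_sq A c (f p))"
  unfolding trace_dev_sq_def by (auto intro!: continuous_intros)

lemma continuous_on_trace_dev_sq_lap [continuous_intros]:
  "continuous_on S f \<Longrightarrow> continuous_on S (\<lambda>p. trace_dev_sq_lap A c (f p))"
  unfolding trace_dev_sq_lap_def trace_dev_sq_X2_def case_prod_beta
  by (auto intro!: continuous_intros)

lemma compact_orthogonal_matrices: "compact {x :: real^'n::finite^'n. orthogonal_matrix x}"
proof -
  have "{x :: real^'n^'n. orthogonal_matrix x} =
      (\<Inter>a. \<Inter>b. {x. (\<Sum>k\<in>UNIV. x$k$a * x$k$b) = (if a = b then 1 else 0)})"
    by (auto simp: orthogonal_matrix vec_eq_iff matrix_matrix_mult_def transpose_def mat_def)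
  then have "closed {x :: real^'n^'n. orthogonal_matrix x}"
    by (simp add: closed_INT closed_Collect_eq continuous_on_component continuous_intros)
  moreover have "norm x \<le> real CARD('n)" if "orthogonal_matrix x" for x :: "real^'n^'n"
  proof -
    have "norm (x$k) = 1" for k
      using that orthogonal_matrix_orthonormal_rows[of x] by (auto simp: row_def vec_eq_iff)
    moreover have "norm x \<le> (\<Sum>k\<in>UNIV. norm (x$k))"
      unfolding norm_vec_def by (rule L2_set_le_sum) auto
    ultimately show ?thesis by simp
  qed
  then have "bounded {x :: real^'n^'n. orthogonal_matrix x}"
    unfolding bounded_iff by blast
  ultimately show ?thesis by (simp add: compact_eq_bounded_closed)
qed

lemma first_nonneg_time:
  fixes z :: "real \<Rightarrow> 'a::t2_space \<Rightarrow> real"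
  assumes K: "compact K" and cont: "continuous_on ({0..T} \<times> K) (\<lambda>(t,x). z t x)"
    and t: "0 \<le> t" "t \<le> T" and x: "x \<in> K" and nonneg: "z t x \<ge> 0"
  obtains t1 where "0 \<le> t1" "t1 \<le> T" "\<exists>y\<in>K. z t1 y \<ge> 0"
    "\<And>s y. 0 \<le> s \<Longrightarrow> s < t1 \<Longrightarrow> y \<in> K \<Longrightarrow> z s y < 0"
proof -
  define S where "S = ({0..T} \<times> K) \<inter> (\<lambda>(t,x). z t x) -` {0..}"
  have "compact ({0..T} \<times> K)" using K by (intro compact_Times compact_Icc)
  moreover have "closed S"
    unfolding S_def
    by (rule continuous_closed_preimage) (use cont calculation compact_imp_closed in auto)
  ultimately have "compact (fst ` S)"
    unfolding S_def
    by (intro compact_continuous_image continuous_on_fst continuous_on_id)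
       (metis S_def compact_Int_closed inf.absorb_iff2 inf_le1)
  moreover have "(t, x) \<in> S" using t x nonneg by (auto simp: S_def)
  ultimately obtain t1 where t1: "t1 \<in> fst ` S" "\<forall>s\<in>fst ` S. t1 \<le> s"
    using compact_attains_inf by blast
  show thesis
  proof
    show "0 \<le> t1" "t1 \<le> T" "\<exists>y\<in>K. z t1 y \<ge> 0" using t1(1) by (auto simp: S_def)
    show "z s y < 0" if "0 \<le> s" "s < t1" "y \<in> K" for s y
      using that t1 \<open>t1 \<le> T\<close> by (force simp: S_def)
  qed
qed

lemma parabolic_max_principle:
  fixes z :: "real \<Rightarrow> 'a::t2_space \<Rightarrow> real"
  assumes K: "compact K" and cont: "continuous_on ({0..T} \<times> K) (\<lambda>(t,x). z t x)"
    and init: "\<And>x. x \<in> K \<Longrightarrow> z 0 x < 0"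
    and decr: "\<And>t x. 0 < t \<Longrightarrow> t \<le> T \<Longrightarrow> x \<in> K \<Longrightarrow> (\<forall>y\<in>K. z t y \<le> z t x) \<Longrightarrow>
        \<exists>D. ((\<lambda>s. z s x) has_real_derivative D) (at t) \<and> D < 0"
    and t: "0 \<le> t" "t \<le> T" and x: "x \<in> K"
  shows "z t x < 0"
proof (rule ccontr)
  assume "\<not> z t x < 0"
  then obtain t1 where t1: "0 \<le> t1" "t1 \<le> T" "\<exists>y\<in>K. z t1 y \<ge> 0"
    and before: "\<And>s y. 0 \<le> s \<Longrightarrow> s < t1 \<Longrightarrow> y \<in> K \<Longrightarrow> z s y < 0"
    using first_nonneg_time[OF K cont t x] by (metis not_le)
  have "t1 > 0" using t1 init by (metis order.not_eq_order_implies_strict not_le)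
  have "continuous_on K ((\<lambda>(t,x). z t x) \<circ> Pair t1)"
    using t1 by (intro continuous_on_compose continuous_intros continuous_on_subset[OF cont]) auto
  then have "continuous_on K (z t1)" by (simp add: o_def)
  then obtain x1 where x1: "x1 \<in> K" "\<forall>y\<in>K. z t1 y \<le> z t1 x1"
    using continuous_attains_sup[OF K] t1(3) by blast
  then obtain D where D: "((\<lambda>s. z s x1) has_real_derivative D) (at t1)" "D < 0"
    using decr[OF \<open>t1 > 0\<close> t1(2)] by blast
  have "z t1 x1 \<ge> 0" using x1 t1(3) by force
  then have "z s x1 \<le> z t1 x1" if "t1 - t1 < s" "s < t1" for s
    using before[of s x1] x1(1) that by simp
  then have "D \<ge> 0" by (rule DERIV_nonneg_at_left_max[OF D(1) \<open>t1 > 0\<close>])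
  with D(2) show False by simp
qed

lemma lie_X2_scaled_le_of_max:
  fixes x :: "real^'n::{finite,linorder}^'n::{finite,linorder}"
  assumes hs: "heat_solution_On phi v" and t: "t > 0" and x: "orthogonal_matrix x" and ij: "i \<noteq> j"
    and w: "has_second_deriv_at_0 (\<lambda>r. w (x ** rot_exp i j r)) D"
    and max: "\<forall>y. orthogonal_matrix y \<longrightarrow> \<sigma> * v t y - w y \<le> \<sigma> * v t x - w x"
  shows "\<sigma> * lie_X i j (lie_X i j (v t)) x \<le> D"
proof -
  have "\<forall>s. (\<lambda>r. v t (x ** rot_exp i j r)) differentiable (at s)"
    and "(\<lambda>r. lie_X i j (v t) (x ** rot_exp i j r)) differentiable (at 0)"
    using hs t x unfolding heat_solution_On_def by blast+
  note d = lie_X_curve_derivs[OF ij this]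
  show ?thesis
  proof (rule second_deriv_le_of_max[OF _ _ w])
    show "\<forall>r. ((\<lambda>r. \<sigma> * v t (x ** rot_exp i j r)) has_real_derivative
        \<sigma> * deriv (\<lambda>r. v t (x ** rot_exp i j r)) r) (at r)"
      using d(1) by (auto intro: DERIV_cmult)
    show "((\<lambda>r. \<sigma> * deriv (\<lambda>r. v t (x ** rot_exp i j r)) r) has_real_derivative
        \<sigma> * lie_X i j (lie_X i j (v t)) x) (at 0)"
      using d(2) by (rule DERIV_cmult)
    show "\<forall>r. \<sigma> * v t (x ** rot_exp i j r) - w (x ** rot_exp i j r)
        \<le> \<sigma> * v t (x ** rot_exp i j 0) - w (x ** rot_exp i j 0)"
      using max x ij by (simp add: rot_exp_0 orthogonal_matrix_mul orthogonal_matrix_rot_exp)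
  qed
qed

text \<open>Taking \<sigma> = -1 gives the comparison of v with strict subsolutions.\<close>

lemma heat_solution_scaled_lt_supersolution:
  fixes v w :: "real \<Rightarrow> real^'n::{finite,linorder}^'n::{finite,linorder} \<Rightarrow> real"
  assumes hs: "heat_solution_On phi v"
    and cont: "continuous_on ({0..T} \<times> {x. orthogonal_matrix x}) (\<lambda>(t,x). w t x)"
    and init: "\<And>x. orthogonal_matrix x \<Longrightarrow> \<sigma> * phi x < w 0 x"
    and w_second: "\<And>t x i j. 0 < t \<Longrightarrow> t \<le> T \<Longrightarrow> orthogonal_matrix x \<Longrightarrow> i < j \<Longrightarrow>
        has_second_deriv_at_0 (\<lambda>r. w t (x ** rot_exp i j r)) (w_xx t x i j)"
    and w_time: "\<And>t x. 0 < t \<Longrightarrow> t \<le> T \<Longrightarrow> orthogonal_matrix x \<Longrightarrow>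
        ((\<lambda>s. w s x) has_real_derivative w_t t x) (at t)"
    and super: "\<And>t x. 0 < t \<Longrightarrow> t \<le> T \<Longrightarrow> orthogonal_matrix x \<Longrightarrow>
        (1/2) * (\<Sum>(i,j)\<in>{(i,j). i < j}. w_xx t x i j) < w_t t x"
    and t: "0 \<le> t" "t \<le> T" and x: "orthogonal_matrix x"
  shows "\<sigma> * v t x < w t x"
proof -
  have "\<sigma> * v t x - w t x < 0"
  proof (rule parabolic_max_principle[OF compact_orthogonal_matrices, where z = "\<lambda>t x. \<sigma> * v t x - w t x"])
    have "continuous_on ({0..} \<times> {x. orthogonal_matrix x}) (\<lambda>(t,x). v t x)"
      using hs unfolding heat_solution_On_def by blast
    then have "continuous_on ({0..T} \<times> {x. orthogonal_matrix x}) (\<lambda>(t,x). v t x)"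
      by (rule continuous_on_subset) auto
    then have "continuous_on ({0..T} \<times> {x. orthogonal_matrix x})
        (\<lambda>p. \<sigma> * (\<lambda>(t,x). v t x) p - (\<lambda>(t,x). w t x) p)"
      by (intro continuous_on_diff continuous_on_mult_left cont)
    then show "continuous_on ({0..T} \<times> {x. orthogonal_matrix x}) (\<lambda>(t,x). \<sigma> * v t x - w t x)"
      by (simp add: case_prod_beta')
    show "\<sigma> * v 0 y - w 0 y < 0" if "y \<in> {x. orthogonal_matrix x}" for y
      using hs init that unfolding heat_solution_On_def by force
  next
    fix s y
    assume s: "0 < s" "s \<le> T" and y: "y \<in> {x. orthogonal_matrix x}"
      and max: "\<forall>y'\<in>{x. orthogonal_matrix x}. \<sigma> * v s y' - w s y' \<le> \<sigma> * v s y - w s y"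
    have "\<sigma> * lie_X i j (lie_X i j (v s)) y \<le> w_xx s y i j" if "(i,j) \<in> {(i,j). i < j}" for i j
      using that s y max
      by (intro lie_X2_scaled_le_of_max[OF hs _ _ _ w_second]) auto
    then have "(1/2) * (\<Sum>(i,j)\<in>{(i,j). i < j}. \<sigma> * lie_X i j (lie_X i j (v s)) y)
        \<le> (1/2) * (\<Sum>(i,j)\<in>{(i,j). i < j}. w_xx s y i j)"
      by (intro mult_left_mono sum_mono) auto
    moreover have "\<sigma> * laplacian_On (v s) y = (1/2) * (\<Sum>(i,j)\<in>{(i,j). i < j}. \<sigma> * lie_X i j (lie_X i j (v s)) y)"
      unfolding laplacian_On_def by (simp add: sum_distrib_left case_prod_unfold mult.left_commute)
    ultimately have "\<sigma> * laplacian_On (v s) y \<le> (1/2) * (\<Sum>(i,j)\<in>{(i,j). i < j}. w_xx s y i j)"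
      by simp
    also have "\<dots> < w_t s y" using super s y by simp
    finally have neg: "\<sigma> * laplacian_On (v s) y - w_t s y < 0" by simp
    have "((\<lambda>r. v r y) has_real_derivative laplacian_On (v s) y) (at s)"
      using hs s y unfolding heat_solution_On_def by blast
    then have "((\<lambda>r. \<sigma> * v r y - w r y) has_real_derivative \<sigma> * laplacian_On (v s) y - w_t s y) (at s)"
      using w_time s y by (auto intro!: derivative_intros DERIV_cmult)
    with neg show "\<exists>D. ((\<lambda>r. \<sigma> * v r y - w r y) has_real_derivative D) (at s) \<and> D < 0"
      by blast
  qed (use t x in auto)
  then show ?thesis by simp
qed

lemma heat_flow_trace_dev_sq_expansion:
  fixes A x :: "real^'n::{finite,linorder}^'n::{finite,linorder}"
  assumes hs: "heat_solution_On (trace_dev_sq A c) v"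
    and c: "\<bar>c\<bar> \<le> real CARD('n) * entry_abs_sum A"
    and t: "0 \<le> t" "t \<le> 1" and x: "orthogonal_matrix x"
  shows "\<bar>v t x - (trace_dev_sq A c x + t * trace_dev_sq_lap A c x)\<bar> \<le> trace_dev_sq_lap2_bound A * t^2"
proof -
  define C where "C = trace_dev_sq_lap2_bound A"
  define F where "F s y = trace_dev_sq A c y + s * trace_dev_sq_lap A c y" for s y
  define lap2_terms where "lap2_terms y i j = (1/2) * (\<Sum>(p,q)\<in>{(p,q). p < q}.
      trace_dev_sq_X2_dd c (A ** y) (mul_rot_gen (A ** y) i j) (mul_rot_gen_sq (A ** y) i j) p q)" for y i j
  have C: "C \<ge> 0" unfolding C_def trace_dev_sq_lap2_bound_def by simp
  have strict: "\<sigma> * v t x < \<sigma> * F t x + C * t^2 + e * (1 + t)" if \<sigma>: "\<bar>\<sigma>\<bar> = 1" and e: "e > 0" for \<sigma> e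
  proof (rule heat_solution_scaled_lt_supersolution[OF hs,
        where T = 1 and w = "\<lambda>s y. \<sigma> * F s y + C * s^2 + e * (1 + s)"
        and w_xx = "\<lambda>s y i j. \<sigma> * (trace_dev_sq_X2 c (A ** y) i j + s * lap2_terms y i j)"
        and w_t = "\<lambda>s y. \<sigma> * trace_dev_sq_lap A c y + C * (2 * s) + e"])
    show "continuous_on ({0..1} \<times> {x. orthogonal_matrix x}) (\<lambda>(s,y). \<sigma> * F s y + C * s^2 + e * (1 + s))"
      unfolding F_def case_prod_beta' by (auto intro!: continuous_intros)
    show "\<sigma> * trace_dev_sq A c y < \<sigma> * F 0 y + C * 0^2 + e * (1 + 0)" for y
      using e by (simp add: F_def)
    show "has_second_deriv_at_0 (\<lambda>r. \<sigma> * F s (y ** rot_exp i j r) + C * s^2 + e * (1 + s))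
        (\<sigma> * (trace_dev_sq_X2 c (A ** y) i j + s * lap2_terms y i j))" if "i < j" for s y i j
    proof -
      have "i \<noteq> j" using that by simp
      then have "has_second_deriv_at_0 (\<lambda>r. \<sigma> * F s (y ** rot_exp i j r))
          (\<sigma> * (trace_dev_sq_X2 c (A ** y) i j + s * lap2_terms y i j))"
        unfolding F_def lap2_terms_def
        by (intro has_second_deriv_at_0_cmult has_second_deriv_at_0_add
            has_second_deriv_at_0_trace_dev_sq has_second_deriv_at_0_trace_dev_sq_lap)
      from has_second_deriv_at_0_add[OF this has_second_deriv_at_0_const] show ?thesis
        by (rule has_second_deriv_at_0_cong) simp_all
    qed
    show "((\<lambda>s. \<sigma> * F s y + C * s^2 + e * (1 + s)) has_real_derivative
        \<sigma> * trace_dev_sq_lap A c y + C * (2 * s) + e) (at s)" for s y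
      unfolding F_def by (auto intro!: derivative_eq_intros)
    show "(1/2) * (\<Sum>(i,j)\<in>{(i,j). i < j}. \<sigma> * (trace_dev_sq_X2 c (A ** y) i j + s * lap2_terms y i j))
        < \<sigma> * trace_dev_sq_lap A c y + C * (2 * s) + e"
      if s: "0 < s" "s \<le> 1" and y: "orthogonal_matrix y" for s y
    proof -
      have "(1/2) * (\<Sum>(i,j)\<in>{(i,j). i < j}. \<sigma> * (trace_dev_sq_X2 c (A ** y) i j + s * lap2_terms y i j))
          = \<sigma> * trace_dev_sq_lap A c y + s * (\<sigma> * trace_dev_sq_lap2 A c y)"
        unfolding trace_dev_sq_lap_def trace_dev_sq_lap2_def lap2_terms_def
        by (simp add: sum.distrib sum_distrib_left case_prod_beta' algebra_simps)
      moreover have "\<sigma> * trace_dev_sq_lap2 A c y \<le> C"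
        using abs_trace_dev_sq_lap2_le[OF y c] \<sigma> abs_le_D1[of "\<sigma> * trace_dev_sq_lap2 A c y"]
        by (simp add: abs_mult C_def)
      then have "s * (\<sigma> * trace_dev_sq_lap2 A c y) \<le> s * C"
        using s by (intro mult_left_mono) auto
      moreover have "s * C \<le> C * (2 * s)" using s C by simp
      ultimately show ?thesis using e by linarith
    qed
  qed (use t x in auto)
  have "\<bar>v t x - F t x\<bar> \<le> C * t^2 + e" if e: "e > 0" for e
  proof -
    have "e / (1 + t) > 0" "e / (1 + t) * (1 + t) = e" using e t by auto
    then show ?thesis
      using strict[of 1 "e / (1 + t)"] strict[of "-1" "e / (1 + t)"] by (simp add: abs_le_iff)
  qed
  then show ?thesis
    unfolding C_def F_def by (rule field_le_epsilon) simp
qed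

theorem mainTheorem6:
  fixes A :: "real^'n::{finite,linorder}^'n::{finite,linorder}"
    and u :: "real^'n::{finite,linorder}^'n::{finite,linorder} \<Rightarrow> real \<Rightarrow> real^'n::{finite,linorder}^'n::{finite,linorder} \<Rightarrow> real"
  assumes "CARD('n) \<ge> 2"
    and "trace (A ** transpose A) = real CARD('n)"
    and "\<And>Q. orthogonal_matrix Q \<Longrightarrow>
           heat_solution_On (\<lambda>y. (trace (A ** y) - trace (A ** Q))^2) (u Q)"
  shows "\<exists>C. \<forall>\<^sub>F t in at_right 0. \<forall>Q. orthogonal_matrix Q \<longrightarrow>
           \<bar>u Q t Q - t * (real CARD('n) - trace ((A ** Q) ** (A ** Q)))\<bar> \<le> C * t^2"
proof (intro exI[of _ "trace_dev_sq_lap2_bound A"])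
  have "\<bar>u Q t Q - t * (real CARD('n) - trace ((A ** Q) ** (A ** Q)))\<bar> \<le> trace_dev_sq_lap2_bound A * t^2"
    if t: "0 < t" "t < 1" and Q: "orthogonal_matrix Q" for t Q
  proof -
    define c where "c = trace (A ** Q)"
    have "heat_solution_On (trace_dev_sq A c) (u Q)"
      unfolding trace_dev_sq_def[abs_def] c_def using assms(3)[OF Q] .
    moreover have "\<bar>c\<bar> \<le> real CARD('n) * entry_abs_sum A"
      unfolding c_def by (rule abs_trace_le[OF abs_matrix_mul_orthogonal_entry_le[OF Q]])
    ultimately have "\<bar>u Q t Q - (trace_dev_sq A c Q + t * trace_dev_sq_lap A c Q)\<bar>
        \<le> trace_dev_sq_lap2_bound A * t^2"
      using t Q by (intro heat_flow_trace_dev_sq_expansion) auto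
    moreover have "trace_dev_sq A c Q = 0" by (simp add: trace_dev_sq_def c_def)
    moreover have "trace_dev_sq_lap A c Q = real CARD('n) - trace ((A ** Q) ** (A ** Q))"
      unfolding c_def trace_dev_sq_lap_at_center[OF Q] assms(2) ..
    ultimately show ?thesis by simp
  qed
  then show "\<forall>\<^sub>F t in at_right 0. \<forall>Q. orthogonal_matrix Q \<longrightarrow>
           \<bar>u Q t Q - t * (real CARD('n) - trace ((A ** Q) ** (A ** Q)))\<bar> \<le> trace_dev_sq_lap2_bound A * t^2"
    unfolding eventually_at_right_field by (intro exI[of _ 1]) auto
qed

end
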